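(* Under Assumption 1 and the partition setting of the context, the Shor relaxation (S) (equivalently the convex relaxation (R)) is exact, i.e. $v^\star=p^\star=c^\star$, if for every $h\in H$ there are no $\boldsymbol{\mu}\in\mathbb{R}^m$ and reals $x_{j_{h'}},z_{j_{h'}}$ ($h'\in H$) satisfying all of the following: (a) $d_h^*+\sum_{i\in M}\mu_i\xi^{ih}=0$; (b) $c_{j_h}+\sum_{i\in M}\mu_ia_{ij_h}=0$; (c) $d_{h'}^*+\sum_{i\in M}\mu_i\xi^{ih'}\ge 0$ for all $h'\in H\setminus\{h\}$; (d) $(d_{h'}^*+\sum_{i\in M}\mu_i\xi^{ih'})x_{j_{h'}}=-(c_{j_{h'}}+\sum_{i\in M}\mu_ia_{ij_{h'}})$ for all $h'\in H\setminus\{h\}$; (e) $(d_{h'}^*+\sum_{i\in M}\mu_i\xi^{ih'})z_{j_{h'}}=-(c_{j_{h'}}+\sum_{i\in M}\mu_ia_{ij_{h'}})x_{j_{h'}}$ for all $h'\in H\setminus\{h\}$; (f) for all $i\in M$: $\sum_{h'\in H}\xi^{ih'}\big[z_{j_{h'}}+\sum_{j\in N_{h'}\setminus\{j_{h'}\}}x^h_j(\boldsymbol{\mu})^2\big]+2\sum_{h'\in H}a_{ij_{h'}}x_{j_{h'}}+2\sum_{j\in N\setminus N_H}a_{ij}x^h_j(\boldsymbol{\mu})\le b_i$; (g) $x_{j_{h'}}^2\le z_{j_{h'}}$ for all $h'\in H$; (h) $\mu_i\ge 0$ for all $i\in M$.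
   Context: Let $N=\{1,\dots,n\}$ and $M=\{1,\dots,m\}$. Let ${\bf D}$ and ${\bf A}^i$ ($i\in M$) be real diagonal $n\times n$ matrices, ${\bf c},{\bf a}_i\in\mathbb{R}^n$ ($a_{ij}$ denotes the $j$-th entry of ${\bf a}_i$) and $b_i\in\mathbb{R}$. The diagonal QCQP is (P): $c^\star=\inf\{{\bf x}^\top{\bf D}{\bf x}+2{\bf c}^\top{\bf x} : {\bf x}^\top{\bf A}^i{\bf x}+2{\bf a}_i^\top{\bf x}\le b_i,\ i\in M\}$. Its Shor relaxation is (S): $v^\star=\inf\{{\bf D}\bullet{\bf X}+2{\bf c}^\top{\bf x} : {\bf A}^i\bullet{\bf X}+2{\bf a}_i^\top{\bf x}\le b_i\ (i\in M),\ {\bf X}-{\bf x}{\bf x}^\top\succeq {\bf O}\}$, where ${\bf P}\bullet{\bf Q}=\mathrm{trace}({\bf P}{\bf Q})$. The convex relaxation is (R): $p^\star=\inf\{\sum_{j\in N}D_{jj}z_j+2\sum_{j\in N}c_jx_j : \sum_{j\in N}A^i_{jj}z_j+2\sum_{j\in N}a_{ij}x_j\le b_i\ (i\in M),\ x_j^2\le z_j\ (j\in N)\}$. Assumption 1: (i) the feasible region of (P) is nonempty; (ii) there exists $\bar{\bf y}\ge 0$ with $\sum_{i\in M}\bar y_i{\bf A}^i\succ{\bf O}$; (iii) the feasible region of (S) has nonempty interior. Partition setting: $\{N_h\}_{h\in H}$ is a partition of $N$ such that for each $h\in H$ and $i\in M$ there is a number $\xi^{ih}$ with $A^i_{jj}=\xi^{ih}$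 for all $j\in N_h$. For each $h\in H$, $d_h^*=\min_{j\in N_h}D_{jj}$ and it is assumed that this minimum is attained at a unique index $j_h\in N_h$. $N_H=\{j_h : h\in H\}$. For fixed $h\in H$ and $j\in N\setminus N_H$, $x_j^h(\boldsymbol{\mu})=-\frac{c_j+\sum_{i\in M}\mu_ia_{ij}}{D_{jj}-d_h^*}$ if $j\in N_h\setminus\{j_h\}$, and $x_j^h(\boldsymbol{\mu})=-\frac{c_j+\sum_{i\in M}\mu_ia_{ij}}{D_{jj}+\sum_{i\in M}\xi^{ih'}\mu_i}$ if $j\in N_{h'}\setminus\{j_{h'}\}$ with $h'\ne h$ (the denominators are positive under condition (c)). *)

theory Defs
  imports "HOL-Analysis.Analysis"
begin

definition diag_mat :: "real^'n^'n \<Rightarrow> bool" where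
  "diag_mat A \<longleftrightarrow> (\<forall>i j. i \<noteq> j \<longrightarrow> A$i$j = 0)"

definition outer :: "real^'n \<Rightarrow> real^'n^'n" where
  "outer x = (\<chi> i j. x$i * x$j)"

definition mat_dot :: "real^'n^'n \<Rightarrow> real^'n^'n \<Rightarrow> real" where
  "mat_dot P Q = trace (P ** Q)"

definition psd :: "real^'n^'n \<Rightarrow> bool" where
  "psd Y \<longleftrightarrow> transpose Y = Y \<and> (\<forall>v. 0 \<le> v \<bullet> (Y *v v))"

definition pd :: "real^'n^'n \<Rightarrow> bool" where
  "pd Y \<longleftrightarrow> transpose Y = Y \<and> (\<forall>v. v \<noteq> 0 \<longrightarrow> 0 < v \<bullet> (Y *v v))"

definition P_feasible :: "('m \<Rightarrow> real^'n^'n) \<Rightarrow> ('m \<Rightarrow> real^'n) \<Rightarrow> ('m \<Rightarrow> real) \<Rightarrow> real^'n \<Rightarrow> bool" where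
  "P_feasible A a b x \<longleftrightarrow> (\<forall>i. x \<bullet> (A i *v x) + 2 * (a i \<bullet> x) \<le> b i)"

definition cstar :: "real^'n^'n \<Rightarrow> real^'n \<Rightarrow> ('m \<Rightarrow> real^'n^'n) \<Rightarrow> ('m \<Rightarrow> real^'n) \<Rightarrow> ('m \<Rightarrow> real) \<Rightarrow> real" where
  "cstar D c A a b = Inf {x \<bullet> (D *v x) + 2 * (c \<bullet> x) | x. P_feasible A a b x}"

definition S_feasible :: "('m \<Rightarrow> real^'n^'n) \<Rightarrow> ('m \<Rightarrow> real^'n) \<Rightarrow> ('m \<Rightarrow> real) \<Rightarrow> real^'n \<Rightarrow> real^'n^'n \<Rightarrow> bool" where
  "S_feasible A a b x X \<longleftrightarrow> (\<forall>i. mat_dot (A i) X + 2 * (a i \<bullet> x) \<le> b i) \<and> psd (X - outer x)"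

definition vstar :: "real^'n^'n \<Rightarrow> real^'n \<Rightarrow> ('m \<Rightarrow> real^'n^'n) \<Rightarrow> ('m \<Rightarrow> real^'n) \<Rightarrow> ('m \<Rightarrow> real) \<Rightarrow> real" where
  "vstar D c A a b = Inf {mat_dot D X + 2 * (c \<bullet> x) | x X. S_feasible A a b x X}"

text \<open>Nonempty interior of the feasible region of (S), as a subset of R^n \<times> S^n
  (S^n = symmetric matrices).\<close>
definition S_interior_nonempty :: "('m \<Rightarrow> real^'n^'n) \<Rightarrow> ('m \<Rightarrow> real^'n) \<Rightarrow> ('m \<Rightarrow> real) \<Rightarrow> bool" where
  "S_interior_nonempty A a b \<longleftrightarrow>
     (\<exists>x X e. e > 0 \<and> transpose X = X \<and>
        (\<forall>y Y. transpose Y = Y \<longrightarrow> dist y x < e \<longrightarrow> dist Y X < e \<longrightarrow> S_feasible A a b y Y))"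

definition R_feasible :: "('m \<Rightarrow> real^'n^'n) \<Rightarrow> ('m \<Rightarrow> real^'n) \<Rightarrow> ('m \<Rightarrow> real) \<Rightarrow> real^'n \<Rightarrow> real^'n \<Rightarrow> bool" where
  "R_feasible A a b x z \<longleftrightarrow> (\<forall>i. (\<Sum>j\<in>UNIV. A i $ j $ j * z$j) + 2 * (a i \<bullet> x) \<le> b i)
      \<and> (\<forall>j. (x$j)^2 \<le> z$j)"

definition pstar :: "real^'n^'n \<Rightarrow> real^'n \<Rightarrow> ('m \<Rightarrow> real^'n^'n) \<Rightarrow> ('m \<Rightarrow> real^'n) \<Rightarrow> ('m \<Rightarrow> real) \<Rightarrow> real" where
  "pstar D c A a b = Inf {(\<Sum>j\<in>UNIV. D$j$j * z$j) + 2 * (c \<bullet> x) | x z. R_feasible A a b x z}"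

definition dstar :: "real^'n^'n \<Rightarrow> ('h \<Rightarrow> 'n set) \<Rightarrow> 'h \<Rightarrow> real" where
  "dstar D Np h = Min ((\<lambda>j. D$j$j) ` Np h)"

definition part_idx :: "('h \<Rightarrow> 'n set) \<Rightarrow> 'n \<Rightarrow> 'h" where
  "part_idx Np j = (THE h. j \<in> Np h)"

definition xh :: "real^'n^'n \<Rightarrow> real^'n \<Rightarrow> ('m \<Rightarrow> real^'n) \<Rightarrow> ('h \<Rightarrow> 'n set) \<Rightarrow> ('m \<Rightarrow> 'h \<Rightarrow> real)
     \<Rightarrow> 'h \<Rightarrow> ('m \<Rightarrow> real) \<Rightarrow> 'n \<Rightarrow> real" where
  "xh D c a Np \<xi> h \<mu> j =
     (let h' = part_idx Np j; num = c$j + (\<Sum>i\<in>UNIV. \<mu> i * a i $ j) in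
      if h' = h then - num / (D$j$j - dstar D Np h)
      else - num / (D$j$j + (\<Sum>i\<in>UNIV. \<xi> i h' * \<mu> i)))"

end

theory Submission
  imports Defs
begin

(*
  Since all data are diagonal, (S) only sees the diagonal of X, and (R) is (S) written in the
  variables z_j = X_jj; so v* = p*. The positive definite combination of Assumption 1(ii) makes
  the feasible set of (R) compact, so (R) has a minimizer (x, z), and an interior point of (S)
  is a Slater point of (R), which yields Lagrange multipliers mu >= 0. The Lagrangian separates
  into the one-dimensional problems  min q_j t + 2 l_j s  over s^2 <= t, whose minimizers satisfy
  q_j >= 0, q_j x_j = -l_j, q_j z_j = -l_j x_j, and z_j = x_j^2 as soon as q_j > 0.
  Within a block N_h the coefficient q_j exceeds q_(j_h) >= 0 except at j_h itself, so a
  coordinate with z_j <> x_j^2 must be some j_h with q_(j_h) = 0; then x_j = x_j^h(mu) off N_H,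
  and mu together with the values of (x, z) at N_H satisfies (a)-(h), which is excluded.
  Hence z = x^2 componentwise, x is feasible for (P), and c* = p*.
*)

section \<open>Diagonal matrices and the relaxations (S) and (R)\<close>

lemma diag_mat_mult_vec_nth:
  assumes "diag_mat A" shows "(A *v x) $ j = A$j$j * x$j"
proof -
  have "(\<Sum>k\<in>UNIV. A$j$k * x$k) = (\<Sum>k\<in>UNIV. if k = j then A$j$j * x$j else 0)"
    using assms by (intro sum.cong) (auto simp: diag_mat_def)
  then show ?thesis by (simp add: matrix_vector_mult_def)
qed

lemma diag_mat_quadratic_form:
  assumes "diag_mat A" shows "x \<bullet> (A *v x) = (\<Sum>j\<in>UNIV. A$j$j * (x$j)^2)"
  by (simp add: inner_vec_def diag_mat_mult_vec_nth[OF assms] power2_eq_square mult_ac)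

lemma mat_dot_diag_mat:
  assumes "diag_mat P" shows "mat_dot P X = (\<Sum>j\<in>UNIV. P$j$j * X$j$j)"
proof -
  have "(P ** X)$j$j = P$j$j * X$j$j" for j
  proof -
    have "(\<Sum>k\<in>UNIV. P$j$k * X$k$j) = (\<Sum>k\<in>UNIV. if k = j then P$j$j * X$j$j else 0)"
      using assms by (intro sum.cong) (auto simp: diag_mat_def)
    then show ?thesis by (simp add: matrix_matrix_mult_def)
  qed
  then show ?thesis by (simp add: mat_dot_def trace_def)
qed

lemma diag_mat_transpose: "diag_mat A \<Longrightarrow> transpose A = A"
  by (simp add: diag_mat_def transpose_def vec_eq_iff) metis

lemma quadratic_form_axis: "axis j 1 \<bullet> (Y *v axis j (1::real)) = Y$j$j"
proof -
  have "(\<Sum>k\<in>UNIV. Y$j$k * axis j (1::real) $ k) = (\<Sum>k\<in>UNIV. if k = j then Y$j$j else 0)"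
    by (intro sum.cong) (auto simp: axis_def)
  then show ?thesis by (simp add: inner_axis' matrix_vector_mult_def)
qed

lemma psd_diag_nonneg: "psd Y \<Longrightarrow> 0 \<le> Y$j$j"
  using quadratic_form_axis[of j Y] by (metis psd_def)

lemma pd_diag_pos: "pd Y \<Longrightarrow> 0 < Y$j$j"
  using quadratic_form_axis[of j Y] by (metis pd_def axis_eq_0_iff zero_neq_one)

lemma psd_diagonal:
  assumes "\<forall>j. 0 \<le> d j"
  shows "psd (\<chi> r s. if r = s then d r else (0::real))"
proof -
  let ?E = "(\<chi> r s. if r = s then d r else (0::real))"
  have "diag_mat ?E" by (simp add: diag_mat_def)
  then show ?thesis
    using assms diag_mat_quadratic_form diag_mat_transpose
    by (fastforce simp: psd_def intro: sum_nonneg)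
qed

lemma R_feasible_of_S_feasible:
  assumes "\<forall>i. diag_mat (A i)" "S_feasible A a b x X"
  shows "R_feasible A a b x (\<chi> j. X$j$j)"
proof -
  have "(x$j)^2 \<le> X$j$j" for j
    using assms(2) psd_diag_nonneg[of "X - outer x" j]
    by (simp add: S_feasible_def outer_def power2_eq_square)
  with assms show ?thesis by (simp add: S_feasible_def R_feasible_def mat_dot_diag_mat)
qed

lemma S_feasible_of_R_feasible:
  assumes "\<forall>i. diag_mat (A i)" "R_feasible A a b x z"
  shows "\<exists>X. S_feasible A a b x X \<and> (\<forall>j. X$j$j = z$j)"
proof -
  let ?X = "outer x + (\<chi> r s. if r = s then z$r - (x$r)^2 else 0)"
  have diag: "\<forall>j. ?X$j$j = z$j" by (simp add: outer_def power2_eq_square)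
  moreover have "psd (?X - outer x)"
    using assms(2) psd_diagonal[of "\<lambda>j. z$j - (x$j)^2"] by (simp add: R_feasible_def)
  ultimately have "S_feasible A a b x ?X"
    using assms by (simp add: S_feasible_def R_feasible_def mat_dot_diag_mat)
  with diag show ?thesis by blast
qed

lemma vstar_eq_pstar:
  assumes "diag_mat D" and "\<forall>i. diag_mat (A i)"
  shows "vstar D c A a b = pstar D c A a b"
proof -
  have "{mat_dot D X + 2 * (c \<bullet> x) | x X. S_feasible A a b x X}
      = {(\<Sum>j\<in>UNIV. D$j$j * z$j) + 2 * (c \<bullet> x) | x z. R_feasible A a b x z}" (is "?S = ?R")
  proof (intro set_eqI iffI)
    fix v assume "v \<in> ?S"
    then obtain x X where "v = mat_dot D X + 2 * (c \<bullet> x)" "S_feasible A a b x X" by blast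
    then show "v \<in> ?R"
      using R_feasible_of_S_feasible[OF assms(2)] assms(1) by (force simp: mat_dot_diag_mat)
  next
    fix v assume "v \<in> ?R"
    then obtain x z where v: "v = (\<Sum>j\<in>UNIV. D$j$j * z$j) + 2 * (c \<bullet> x)" "R_feasible A a b x z"
      by blast
    then obtain X where "S_feasible A a b x X" "\<forall>j. X$j$j = z$j"
      using S_feasible_of_R_feasible[OF assms(2)] by blast
    moreover from this(2) have "v = mat_dot D X + 2 * (c \<bullet> x)"
      using v(1) assms(1) by (simp add: mat_dot_diag_mat)
    ultimately show "v \<in> ?S" by blast
  qed
  then show ?thesis by (simp add: vstar_def pstar_def)
qed

section \<open>Lagrange multipliers for affine programs over a convex set\<close>

definition affine_fun :: "('w::real_vector \<Rightarrow> real) \<Rightarrow> bool" where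
  "affine_fun f \<longleftrightarrow> (\<forall>x y u v. u + v = 1 \<longrightarrow> f (u *\<^sub>R x + v *\<^sub>R y) = u * f x + v * f y)"

lemma affine_fun_diff_const:
  assumes "affine_fun f" shows "affine_fun (\<lambda>w. f w - p)"
  unfolding affine_fun_def
proof (intro allI impI)
  fix x y and u v :: real assume uv: "u + v = 1"
  then have "p = u * p + v * p" by (metis distrib_right mult_1)
  then show "f (u *\<^sub>R x + v *\<^sub>R y) - p = u * (f x - p) + v * (f y - p)"
    using assms uv by (simp add: affine_fun_def algebra_simps)
qed

lemma nonneg_if_nonneg_along_ray:
  fixes C L :: real
  assumes "\<And>t. 0 \<le> t \<Longrightarrow> 0 \<le> C + t * L" shows "0 \<le> L"
proof (rule ccontr)
  assume L: "\<not> 0 \<le> L"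
  define t where "t = (\<bar>C\<bar> + 1) / - L"
  have "0 \<le> t" using L unfolding t_def by (intro divide_nonneg_pos) auto
  moreover have "t * L = - (\<bar>C\<bar> + 1)" using L by (simp add: t_def)
  ultimately show False using assms[of t] by linarith
qed

lemma nonneg_if_nonneg_near_zero:
  fixes C K :: real
  assumes "\<And>e. 0 < e \<Longrightarrow> 0 \<le> C + e * K" shows "0 \<le> C"
proof (rule ccontr)
  assume C: "\<not> 0 \<le> C"
  define e where "e = - C / (2 * (\<bar>K\<bar> + 1))"
  have e: "0 < e" using C unfolding e_def by (intro divide_pos_pos) auto
  have "e * K \<le> e * \<bar>K\<bar>" using e by (simp add: mult_left_mono)
  also have "\<dots> < - C / 2" using C by (simp add: e_def field_simps)
  finally show False using assms[OF e] C by linarith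
qed

lemma convex_comb_strict_less:
  fixes a b c d s t :: real
  assumes "a < b" "c < d" "0 \<le> s" "0 \<le> t" "s + t = 1"
  shows "s * a + t * c < s * b + t * d"
proof (cases "s = 0")
  case False
  then have "s * a < s * b" using assms by simp
  moreover have "t * c \<le> t * d" using assms by (simp add: mult_left_mono)
  ultimately show ?thesis by linarith
qed (use assms in simp)

definition strict_upper_image ::
    "('w \<Rightarrow> real) \<Rightarrow> ('m \<Rightarrow> 'w \<Rightarrow> real) \<Rightarrow> 'm set \<Rightarrow> 'w set \<Rightarrow> (real \<times> (real^'m::finite)) set" where
  "strict_upper_image f g I K = {v. \<exists>w\<in>K. f w < fst v \<and> (\<forall>i\<in>I. g i w < snd v $ i)}"

lemma convex_strict_upper_image:
  fixes f :: "'w::real_vector \<Rightarrow> real" and g :: "'m::finite \<Rightarrow> 'w \<Rightarrow> real"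
  assumes "convex K" "affine_fun f" "\<forall>i. affine_fun (g i)"
  shows "convex (strict_upper_image f g I K)"
  unfolding strict_upper_image_def
proof (rule convexI)
  fix v v' :: "real \<times> (real^'m)" and s t :: real
  assume "v \<in> {v. \<exists>w\<in>K. f w < fst v \<and> (\<forall>i\<in>I. g i w < snd v $ i)}"
    and "v' \<in> {v. \<exists>w\<in>K. f w < fst v \<and> (\<forall>i\<in>I. g i w < snd v $ i)}"
    and st: "0 \<le> s" "0 \<le> t" "s + t = 1"
  then obtain w w' where w: "w \<in> K" "f w < fst v" "\<forall>i\<in>I. g i w < snd v $ i"
    and w': "w' \<in> K" "f w' < fst v'" "\<forall>i\<in>I. g i w' < snd v' $ i"
    by blast
  have aff: "h (s *\<^sub>R w + t *\<^sub>R w') = s * h w + t * h w'" if "affine_fun h" for h :: "'w \<Rightarrow> real"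
    using that st(3) by (simp add: affine_fun_def)
  have "s *\<^sub>R w + t *\<^sub>R w' \<in> K" using assms(1) w(1) w'(1) st by (simp add: convex_def)
  moreover have "f (s *\<^sub>R w + t *\<^sub>R w') < fst (s *\<^sub>R v + t *\<^sub>R v')"
    unfolding aff[OF assms(2)] using convex_comb_strict_less[OF w(2) w'(2) st] by simp
  moreover have "g i (s *\<^sub>R w + t *\<^sub>R w') < snd (s *\<^sub>R v + t *\<^sub>R v') $ i" if "i \<in> I" for i
    unfolding aff[OF assms(3)[rule_format]]
    using convex_comb_strict_less[OF w(3)[rule_format, OF that] w'(3)[rule_format, OF that] st] by simp
  ultimately show "s *\<^sub>R v + t *\<^sub>R v' \<in> {v. \<exists>w\<in>K. f w < fst v \<and> (\<forall>i\<in>I. g i w < snd v $ i)}"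
    by blast
qed

lemma strict_upper_imageI:
  "w \<in> K \<Longrightarrow> f w < u0 \<Longrightarrow> \<forall>i\<in>I. g i w < u$i \<Longrightarrow> (u0, u) \<in> strict_upper_image f g I K"
  unfolding strict_upper_image_def by auto

lemma nonneg_on_strict_upper_image_signs:
  assumes sep: "\<forall>v\<in>strict_upper_image f g I K. 0 \<le> (a0, lam) \<bullet> v" and "w1 \<in> K"
  shows "0 \<le> a0" and "\<And>i. i \<in> I \<Longrightarrow> 0 \<le> lam$i" and "\<And>i. i \<notin> I \<Longrightarrow> lam$i = 0"
proof -
  \<comment> \<open>the image is closed under adding directions that are nonnegative on \<open>{0} \<union> I\<close>\<close>
  have recession: "0 \<le> a0 * d0 + lam \<bullet> d" if "0 \<le> d0" "\<forall>i\<in>I. 0 \<le> d$i" for d0 d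
  proof (rule nonneg_if_nonneg_along_ray)
    fix t :: real assume "0 \<le> t"
    then have "(f w1 + 1 + t * d0, (\<chi> i. g i w1 + 1) + t *\<^sub>R d) \<in> strict_upper_image f g I K"
      using that \<open>w1 \<in> K\<close> by (intro strict_upper_imageI) (auto simp: add_strict_increasing)
    then have "0 \<le> a0 * (f w1 + 1 + t * d0) + lam \<bullet> ((\<chi> i. g i w1 + 1) + t *\<^sub>R d)"
      using sep by fastforce
    then show "0 \<le> a0 * (f w1 + 1) + lam \<bullet> (\<chi> i. g i w1 + 1) + t * (a0 * d0 + lam \<bullet> d)"
      by (simp add: algebra_simps)
  qed
  show "0 \<le> a0" using recession[of 1 0] by simp
  show "0 \<le> lam$i" if "i \<in> I" for i
  proof -
    have "\<forall>k\<in>I. 0 \<le> axis i (1::real) $ k" by (simp add: axis_def)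
    then show ?thesis using recession[of 0 "axis i 1"] by (simp add: inner_axis)
  qed
  show "lam$i = 0" if "i \<notin> I" for i
  proof -
    have "\<forall>k\<in>I. 0 \<le> axis i (1::real) $ k" "\<forall>k\<in>I. 0 \<le> (- axis i (1::real)) $ k"
      using that by (auto simp: axis_def)
    then show ?thesis using recession[of 0 "axis i 1"] recession[of 0 "- axis i 1"]
      by (simp add: inner_axis)
  qed
qed

lemma nonneg_on_strict_upper_image_bound:
  assumes sep: "\<forall>v\<in>strict_upper_image f g I K. 0 \<le> (a0, lam) \<bullet> v" and "w \<in> K"
  shows "0 \<le> a0 * f w + lam \<bullet> (\<chi> i. g i w)"
proof (rule nonneg_if_nonneg_near_zero)
  fix e :: real assume "0 < e"
  then have "(f w + e, \<chi> i. g i w + e) \<in> strict_upper_image f g I K"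
    using \<open>w \<in> K\<close> by (intro strict_upper_imageI) auto
  then have "0 \<le> a0 * (f w + e) + lam \<bullet> (\<chi> i. g i w + e)" using sep by fastforce
  then show "0 \<le> a0 * f w + lam \<bullet> (\<chi> i. g i w) + e * (a0 + (\<Sum>i\<in>UNIV. lam$i))"
    by (simp add: inner_vec_def algebra_simps sum.distrib sum_distrib_left)
qed

lemma fritz_john_multipliers:
  fixes f :: "'w::real_vector \<Rightarrow> real" and g :: "'m::finite \<Rightarrow> 'w \<Rightarrow> real"
  assumes "convex K" "K \<noteq> {}" "affine_fun f" "\<forall>i. affine_fun (g i)"
    and opt: "\<And>w. w \<in> K \<Longrightarrow> \<forall>i\<in>I. g i w \<le> 0 \<Longrightarrow> 0 \<le> f w"
  shows "\<exists>a0 lam. 0 \<le> a0 \<and> (\<forall>i\<in>I. 0 \<le> lam i) \<and> (a0 \<noteq> 0 \<or> (\<exists>i\<in>I. lam i \<noteq> 0))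
           \<and> (\<forall>w\<in>K. 0 \<le> a0 * f w + (\<Sum>i\<in>I. lam i * g i w))"
proof -
  have "0 \<notin> strict_upper_image f g I K"
    using opt by (force simp: strict_upper_image_def)
  then obtain aa where "aa \<noteq> 0" "\<forall>v\<in>strict_upper_image f g I K. 0 \<le> aa \<bullet> v"
    using separating_hyperplane_set_0[OF convex_strict_upper_image[OF assms(1,3,4)]] by blast
  moreover obtain a0 lam where "aa = (a0, lam)" by (cases aa)
  ultimately have sep: "(a0, lam) \<noteq> 0" "\<forall>v\<in>strict_upper_image f g I K. 0 \<le> (a0, lam) \<bullet> v"
    by auto
  obtain w1 where "w1 \<in> K" using assms(2) by blast
  note signs = nonneg_on_strict_upper_image_signs[OF sep(2) this]
  have "lam \<bullet> u = (\<Sum>i\<in>I. lam$i * u$i)" for u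
    unfolding inner_vec_def inner_real_def using signs(3) by (intro sum.mono_neutral_right) auto
  then have "0 \<le> a0 * f w + (\<Sum>i\<in>I. lam$i * g i w)" if "w \<in> K" for w
    using nonneg_on_strict_upper_image_bound[OF sep(2) that] by simp
  moreover have "a0 \<noteq> 0 \<or> (\<exists>i\<in>I. lam$i \<noteq> 0)"
    using sep(1) signs(3) by (auto simp: zero_prod_def vec_eq_iff)
  ultimately show ?thesis using signs(1,2) by blast
qed

lemma lagrange_multipliers:
  fixes f :: "'w::real_vector \<Rightarrow> real" and g :: "'m::finite \<Rightarrow> 'w \<Rightarrow> real"
  assumes "convex K" "affine_fun f" "\<forall>i. affine_fun (g i)"
    and opt: "\<And>w. w \<in> K \<Longrightarrow> \<forall>i. g i w \<le> 0 \<Longrightarrow> p \<le> f w"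
    and slater: "w0 \<in> K" "\<forall>i. g i w0 < 0 \<or> (\<forall>w. g i w = 0)"
  shows "\<exists>\<mu>. (\<forall>i. 0 \<le> \<mu> i) \<and> (\<forall>w\<in>K. p \<le> f w + (\<Sum>i\<in>UNIV. \<mu> i * g i w))"
proof -
  define I where "I = {i. g i w0 < 0}"
  have off_I: "g i w = 0" if "i \<notin> I" for i w using slater(2) that by (auto simp: I_def)
  have opt_I: "0 \<le> f w - p" if "w \<in> K" "\<forall>i\<in>I. g i w \<le> 0" for w
  proof -
    have "\<forall>i. g i w \<le> 0" using that(2) off_I by (metis order_refl)
    then show ?thesis using opt[OF that(1)] by simp
  qed
  have "K \<noteq> {}" using slater(1) by blast
  from fritz_john_multipliers[where I=I, OF assms(1) this affine_fun_diff_const[OF assms(2)] assms(3) opt_I]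
  obtain a0 lam where fj: "0 \<le> a0" "\<forall>i\<in>I. 0 \<le> lam i" "a0 \<noteq> 0 \<or> (\<exists>i\<in>I. lam i \<noteq> 0)"
    "\<forall>w\<in>K. 0 \<le> a0 * (f w - p) + (\<Sum>i\<in>I. lam i * g i w)"
    by blast
  \<comment> \<open>with \<open>a0 = 0\<close> the Fritz John inequality would fail at the Slater point\<close>
  have "0 < a0"
  proof (rule ccontr)
    assume "\<not> 0 < a0"
    with fj(1,3) obtain k where k: "a0 = 0" "k \<in> I" "lam k \<noteq> 0" by auto
    with fj(2) have "0 < lam k" by (simp add: order_less_le)
    have "0 < (\<Sum>i\<in>I. lam i * - g i w0)"
      using k \<open>0 < lam k\<close> fj(2) by (intro sum_pos2[of I k]) (auto simp: I_def mult_pos_neg mult_nonneg_nonpos)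
    moreover have "0 \<le> (\<Sum>i\<in>I. lam i * g i w0)" using fj(4) slater(1) k(1) by simp
    ultimately show False by (simp add: sum_negf)
  qed
  define \<mu> where "\<mu> i = (if i \<in> I then lam i / a0 else 0)" for i
  have "p \<le> f w + (\<Sum>i\<in>UNIV. \<mu> i * g i w)" if "w \<in> K" for w
  proof -
    have "(\<Sum>i\<in>UNIV. \<mu> i * g i w) = (\<Sum>i\<in>I. \<mu> i * g i w)"
      by (intro sum.mono_neutral_right) (auto simp: \<mu>_def)
    also have "\<dots> = (\<Sum>i\<in>I. lam i * g i w) / a0"
      by (simp add: \<mu>_def sum_divide_distrib)
    finally have "(\<Sum>i\<in>UNIV. \<mu> i * g i w) = (\<Sum>i\<in>I. lam i * g i w) / a0" .
    moreover have "0 \<le> (a0 * (f w - p) + (\<Sum>i\<in>I. lam i * g i w)) / a0"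
      using fj(4) that \<open>0 < a0\<close> by simp
    ultimately show ?thesis using \<open>0 < a0\<close> by (simp add: add_divide_distrib)
  qed
  moreover have "0 \<le> \<mu> i" for i using fj(2) \<open>0 < a0\<close> by (simp add: \<mu>_def)
  ultimately show ?thesis by blast
qed

section \<open>Minimizers of the relaxation (R)\<close>

definition R_objective :: "real^'n^'n \<Rightarrow> real^'n \<Rightarrow> real^'n \<Rightarrow> real^'n \<Rightarrow> real" where
  "R_objective D c x z = (\<Sum>j\<in>UNIV. D$j$j * z$j) + 2 * (c \<bullet> x)"

definition R_constraint ::
    "('m \<Rightarrow> real^'n^'n) \<Rightarrow> ('m \<Rightarrow> real^'n) \<Rightarrow> ('m \<Rightarrow> real) \<Rightarrow> 'm \<Rightarrow> real^'n \<Rightarrow> real^'n \<Rightarrow> real" where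
  "R_constraint A a b i x z = (\<Sum>j\<in>UNIV. A i $ j $ j * z$j) + 2 * (a i \<bullet> x) - b i"

lemma R_feasible_iff:
  "R_feasible A a b x z \<longleftrightarrow> (\<forall>i. R_constraint A a b i x z \<le> 0) \<and> (\<forall>j. (x$j)^2 \<le> z$j)"
  unfolding R_feasible_def R_constraint_def by auto

lemma R_feasible_of_P_feasible:
  assumes "\<forall>i. diag_mat (A i)" "P_feasible A a b x"
  shows "R_feasible A a b x (\<chi> j. (x$j)^2)"
  using assms by (simp add: R_feasible_def P_feasible_def diag_mat_quadratic_form)

lemma R_objective_squares:
  "diag_mat D \<Longrightarrow> R_objective D c x (\<chi> j. (x$j)^2) = x \<bullet> (D *v x) + 2 * (c \<bullet> x)"
  by (simp add: R_objective_def diag_mat_quadratic_form)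

lemma sum_weighted_R_constraint:
  "(\<Sum>i\<in>UNIV. \<mu> i * R_constraint A a b i x z) =
   (\<Sum>j\<in>UNIV. (\<Sum>i\<in>UNIV. \<mu> i * A i $ j $ j) * z$j + 2 * (\<Sum>i\<in>UNIV. \<mu> i * a i $ j) * x$j)
     - (\<Sum>i\<in>UNIV. \<mu> i * b i)"
proof -
  have "(\<Sum>i\<in>UNIV. \<mu> i * R_constraint A a b i x z)
      = (\<Sum>i\<in>UNIV. \<Sum>j\<in>UNIV. \<mu> i * A i $ j $ j * z$j + 2 * (\<mu> i * a i $ j * x$j))
        - (\<Sum>i\<in>UNIV. \<mu> i * b i)"
    by (simp add: R_constraint_def inner_vec_def algebra_simps sum.distrib sum_subtractf
        sum_distrib_left)
  also have "\<dots> = (\<Sum>j\<in>UNIV. \<Sum>i\<in>UNIV. \<mu> i * A i $ j $ j * z$j + 2 * (\<mu> i * a i $ j * x$j))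
        - (\<Sum>i\<in>UNIV. \<mu> i * b i)"
    by (subst sum.swap) (rule refl)
  finally show ?thesis
    by (simp add: sum.distrib sum_distrib_left sum_distrib_right mult.assoc)
qed

definition lagrangian_quad :: "real^'n^'n \<Rightarrow> ('m::finite \<Rightarrow> real^'n^'n) \<Rightarrow> ('m \<Rightarrow> real) \<Rightarrow> 'n \<Rightarrow> real" where
  "lagrangian_quad D A \<mu> j = D$j$j + (\<Sum>i\<in>UNIV. \<mu> i * A i $ j $ j)"

definition lagrangian_lin :: "real^'n \<Rightarrow> ('m::finite \<Rightarrow> real^'n) \<Rightarrow> ('m \<Rightarrow> real) \<Rightarrow> 'n \<Rightarrow> real" where
  "lagrangian_lin c a \<mu> j = c$j + (\<Sum>i\<in>UNIV. \<mu> i * a i $ j)"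

lemma R_lagrangian_separable:
  "R_objective D c x z + (\<Sum>i\<in>UNIV. \<mu> i * R_constraint A a b i x z) =
   (\<Sum>j\<in>UNIV. lagrangian_quad D A \<mu> j * z$j + 2 * lagrangian_lin c a \<mu> j * x$j)
     - (\<Sum>i\<in>UNIV. \<mu> i * b i)"
  unfolding sum_weighted_R_constraint R_objective_def lagrangian_quad_def lagrangian_lin_def
  by (simp add: inner_vec_def algebra_simps sum.distrib sum_distrib_left)

lemma parabola_affine_lower_bound:
  fixes W \<alpha> x z :: real
  assumes "0 < W" "x^2 \<le> z"
  shows "W/2 * z - 2 * \<alpha>^2 / W \<le> W * z + 2 * \<alpha> * x"
proof -
  have "W/2 * x^2 + 2 * \<alpha> * x + 2 * \<alpha>^2 / W = W/2 * (x + 2 * \<alpha> / W)^2"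
    using assms(1) by (simp add: field_simps power2_eq_square)
  moreover have "0 \<le> W/2 * (x + 2 * \<alpha> / W)^2" using assms(1) by simp
  moreover have "W/2 * x^2 \<le> W/2 * z" using assms by simp
  ultimately show ?thesis by linarith
qed

lemma abs_le_one_plus_if_square_le:
  fixes x z :: real
  assumes "x^2 \<le> z" shows "\<bar>x\<bar> \<le> 1 + z"
proof (cases "\<bar>x\<bar> \<le> 1")
  case False
  then have "\<bar>x\<bar> * 1 \<le> \<bar>x\<bar> * \<bar>x\<bar>" by (intro mult_left_mono) auto
  then show ?thesis using assms by (simp add: power2_eq_square)
qed (use assms zero_le_power2[of x] in linarith)

lemma R_feasible_diag_bounded:
  fixes A :: "'m::finite \<Rightarrow> real^'n::finite^'n"
  assumes "\<forall>i. diag_mat (A i)"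
    and "\<exists>y :: 'm::finite \<Rightarrow> real. (\<forall>i. 0 \<le> y i) \<and> pd (\<Sum>i\<in>UNIV. y i *\<^sub>R A i)"
  shows "\<exists>\<beta>. \<forall>x z j. R_feasible A a b x z \<longrightarrow> z$j \<le> \<beta> j"
proof -
  obtain y :: "'m \<Rightarrow> real" where y: "\<forall>i. 0 \<le> y i" "pd (\<Sum>i\<in>UNIV. y i *\<^sub>R A i)"
    using assms(2) by blast
  define W where "W j = (\<Sum>i\<in>UNIV. y i * A i $ j $ j)" for j
  define \<alpha> where "\<alpha> j = (\<Sum>i\<in>UNIV. y i * a i $ j)" for j
  define C where "C = (\<Sum>i\<in>UNIV. y i * b i) + (\<Sum>j\<in>UNIV. 2 * (\<alpha> j)^2 / W j)"
  have W_pos: "0 < W j" for j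
    using pd_diag_pos[OF y(2), of j] by (simp add: W_def)
  have "z$k \<le> 2 * C / W k" if R: "R_feasible A a b x z" for x z k
  proof -
    have xz: "(x$j)^2 \<le> z$j" for j using R by (simp add: R_feasible_iff)
    have z_nonneg: "0 \<le> z$j" for j using order_trans[OF zero_le_power2 xz] .
    have "(\<Sum>i\<in>UNIV. y i * R_constraint A a b i x z) \<le> 0"
      using y(1) R by (intro sum_nonpos) (simp add: R_feasible_iff mult_nonneg_nonpos)
    then have "(\<Sum>j\<in>UNIV. W j * z$j + 2 * \<alpha> j * x$j) \<le> (\<Sum>i\<in>UNIV. y i * b i)"
      by (simp add: sum_weighted_R_constraint W_def \<alpha>_def)
    moreover have "(\<Sum>j\<in>UNIV. W j/2 * z$j - 2 * (\<alpha> j)^2 / W j)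
        \<le> (\<Sum>j\<in>UNIV. W j * z$j + 2 * \<alpha> j * x$j)"
      by (intro sum_mono parabola_affine_lower_bound W_pos xz)
    ultimately have "(\<Sum>j\<in>UNIV. W j/2 * z$j) \<le> C"
      by (simp add: C_def sum_subtractf)
    moreover have "W k/2 * z$k \<le> (\<Sum>j\<in>UNIV. W j/2 * z$j)"
      using W_pos z_nonneg by (intro member_le_sum) (auto intro: mult_nonneg_nonneg less_imp_le)
    ultimately show ?thesis using W_pos[of k] by (simp add: field_simps)
  qed
  then show ?thesis by (intro exI[of _ "\<lambda>k. 2 * C / W k"]) blast
qed

lemma bounded_R_feasible:
  fixes A :: "'m::finite \<Rightarrow> real^'n::finite^'n"
  assumes "\<forall>i. diag_mat (A i)"
    and "\<exists>y :: 'm::finite \<Rightarrow> real. (\<forall>i. 0 \<le> y i) \<and> pd (\<Sum>i\<in>UNIV. y i *\<^sub>R A i)"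
  shows "bounded {w. R_feasible A a b (fst w) (snd w)}"
proof -
  obtain \<beta> where \<beta>: "\<And>x z j. R_feasible A a b x z \<Longrightarrow> z$j \<le> \<beta> j"
    using R_feasible_diag_bounded[OF assms] by blast
  show ?thesis
    unfolding bounded_iff
  proof (intro exI ballI)
    fix w :: "(real^'n) \<times> (real^'n)" assume "w \<in> {w. R_feasible A a b (fst w) (snd w)}"
    moreover obtain x z where w: "w = (x, z)" by (cases w)
    ultimately have R: "R_feasible A a b x z" by simp
    then have xz: "(x$j)^2 \<le> z$j" for j by (simp add: R_feasible_iff)
    have "norm w \<le> norm x + norm z" unfolding w by (rule norm_Pair_le)
    also have "\<dots> \<le> (\<Sum>j\<in>UNIV. \<bar>x$j\<bar>) + (\<Sum>j\<in>UNIV. \<bar>z$j\<bar>)"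
      by (intro add_mono norm_le_l1_cart)
    also have "\<dots> = (\<Sum>j\<in>UNIV. \<bar>x$j\<bar> + \<bar>z$j\<bar>)" by (simp add: sum.distrib)
    also have "\<dots> \<le> (\<Sum>j\<in>UNIV. 1 + 2 * \<bar>\<beta> j\<bar>)"
    proof (rule sum_mono)
      fix j
      show "\<bar>x$j\<bar> + \<bar>z$j\<bar> \<le> 1 + 2 * \<bar>\<beta> j\<bar>"
        using abs_le_one_plus_if_square_le[OF xz[of j]] \<beta>[OF R, of j] order_trans[OF zero_le_power2 xz[of j]]
        by linarith
    qed
    finally show "norm w \<le> (\<Sum>j\<in>UNIV. 1 + 2 * \<bar>\<beta> j\<bar>)" .
  qed
qed

lemma compact_R_feasible:
  fixes A :: "'m::finite \<Rightarrow> real^'n::finite^'n"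
  assumes "\<forall>i. diag_mat (A i)"
    and "\<exists>y :: 'm::finite \<Rightarrow> real. (\<forall>i. 0 \<le> y i) \<and> pd (\<Sum>i\<in>UNIV. y i *\<^sub>R A i)"
  shows "compact {w. R_feasible A a b (fst w) (snd w)}"
proof -
  have "{w. R_feasible A a b (fst w) (snd w)} =
      (\<Inter>i. {w. R_constraint A a b i (fst w) (snd w) \<le> 0}) \<inter> (\<Inter>j. {w. (fst w $ j)^2 \<le> snd w $ j})"
    by (auto simp: R_feasible_iff)
  moreover have "closed \<dots>" unfolding R_constraint_def inner_vec_def
    by (intro closed_Int closed_INT ballI closed_Collect_le continuous_intros)
  ultimately have "closed {w. R_feasible A a b (fst w) (snd w)}" by simp
  then show ?thesis using bounded_R_feasible[OF assms] by (simp add: compact_eq_bounded_closed)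
qed

lemma R_minimizer_exists:
  fixes A :: "'m::finite \<Rightarrow> real^'n::finite^'n"
  assumes "\<forall>i. diag_mat (A i)" and "\<exists>x. P_feasible A a b x"
    and "\<exists>y :: 'm::finite \<Rightarrow> real. (\<forall>i. 0 \<le> y i) \<and> pd (\<Sum>i\<in>UNIV. y i *\<^sub>R A i)"
  shows "\<exists>xs zs. R_feasible A a b xs zs \<and>
           (\<forall>x z. R_feasible A a b x z \<longrightarrow> R_objective D c xs zs \<le> R_objective D c x z)"
proof -
  let ?F = "{w. R_feasible A a b (fst w) (snd w)}"
  obtain x where "P_feasible A a b x" using assms(2) by blast
  then have "(x, \<chi> j. (x$j)^2) \<in> ?F" using R_feasible_of_P_feasible[OF assms(1)] by simp
  moreover have "continuous_on ?F (\<lambda>w. R_objective D c (fst w) (snd w))"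
    unfolding R_objective_def inner_vec_def by (intro continuous_intros)
  ultimately obtain w where "w \<in> ?F" "\<forall>w'\<in>?F. R_objective D c (fst w) (snd w) \<le> R_objective D c (fst w') (snd w')"
    using continuous_attains_inf[OF compact_R_feasible[OF assms(1,3)]] by blast
  then show ?thesis by (intro exI[of _ "fst w"] exI[of _ "snd w"]) auto
qed

lemma square_convex_comb_le:
  fixes u v x1 x2 z1 z2 :: real
  assumes "0 \<le> u" "0 \<le> v" "u + v = 1" "x1^2 \<le> z1" "x2^2 \<le> z2"
  shows "(u * x1 + v * x2)^2 \<le> u * z1 + v * z2"
proof -
  have v: "v = 1 - u" using assms(3) by simp
  have "u * x1^2 + v * x2^2 - (u * x1 + v * x2)^2 = u * v * (x1 - x2)^2"
    unfolding v by (simp add: power2_eq_square algebra_simps)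
  moreover have "0 \<le> u * v * (x1 - x2)^2" using assms by simp
  moreover have "u * x1^2 \<le> u * z1" "v * x2^2 \<le> v * z2" using assms by (simp_all add: mult_left_mono)
  ultimately show ?thesis by linarith
qed

lemma convex_coordinatewise_square_le:
  "convex {w :: (real^'n) \<times> (real^'n). \<forall>j. (fst w $ j)^2 \<le> snd w $ j}"
  by (rule convexI) (auto intro: square_convex_comb_le)

lemma affine_fun_R_objective: "affine_fun (\<lambda>w. R_objective D c (fst w) (snd w))"
  unfolding affine_fun_def R_objective_def inner_vec_def
  by (simp add: algebra_simps sum.distrib sum_distrib_left)

lemma affine_fun_R_constraint: "affine_fun (\<lambda>w. R_constraint A a b i (fst w) (snd w))"
  unfolding affine_fun_def
proof (intro allI impI)
  fix x y :: "(real^'a) \<times> (real^'a)" and u v :: real assume uv: "u + v = 1"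
  then have "b i = u * b i + v * b i" by (metis distrib_right mult_1)
  then show "R_constraint A a b i (fst (u *\<^sub>R x + v *\<^sub>R y)) (snd (u *\<^sub>R x + v *\<^sub>R y)) =
      u * R_constraint A a b i (fst x) (snd x) + v * R_constraint A a b i (fst y) (snd y)"
    unfolding R_constraint_def inner_vec_def
    by (simp add: algebra_simps sum.distrib sum_distrib_left)
qed

lemma transpose_add_scaleR: "transpose (X + t *\<^sub>R Y) = transpose X + t *\<^sub>R transpose Y"
  by (simp add: transpose_def vec_eq_iff)

lemma neg_if_nonpos_near_zero:
  fixes c s \<delta> :: real
  assumes "0 < \<delta>" "s \<noteq> 0" "\<And>t. \<bar>t\<bar> < \<delta> \<Longrightarrow> c + t * s \<le> 0"
  shows "c < 0"
proof -
  have "\<bar>\<delta>/2 * sgn s\<bar> < \<delta>" using assms(1,2) by (simp add: abs_mult)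
  then have "c + \<delta>/2 * sgn s * s \<le> 0" by (rule assms(3))
  moreover have "\<delta>/2 * sgn s * s = \<delta>/2 * \<bar>s\<bar>" by (simp add: abs_sgn mult_ac)
  moreover have "0 < \<delta>/2 * \<bar>s\<bar>" using assms(1,2) by simp
  ultimately show ?thesis by linarith
qed

lemma S_interior_constraint_strict:
  fixes A :: "'m \<Rightarrow> real^'n::finite^'n"
  assumes "diag_mat (A i)" "a i \<noteq> 0 \<or> (\<exists>j. A i $ j $ j \<noteq> 0)"
    and "0 < e" "transpose X0 = X0"
    and ball: "\<And>y Y. transpose Y = Y \<Longrightarrow> dist y x0 < e \<Longrightarrow> dist Y X0 < e \<Longrightarrow> S_feasible A a b y Y"
  shows "R_constraint A a b i x0 (\<chi> j. X0$j$j) < 0"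
proof (rule neg_if_nonpos_near_zero)
  let ?s = "(\<Sum>j\<in>UNIV. (A i $ j $ j)^2) + 2 * (a i \<bullet> a i)"
  show "?s \<noteq> 0"
  proof
    assume "?s = 0"
    moreover have "0 \<le> (\<Sum>j\<in>UNIV. (A i $ j $ j)^2)" "0 \<le> a i \<bullet> a i" by (simp_all add: sum_nonneg)
    ultimately have "(\<Sum>j\<in>UNIV. (A i $ j $ j)^2) = 0" "a i \<bullet> a i = 0" by linarith+
    then show False using assms(2) by (simp add: sum_nonneg_eq_0_iff)
  qed
  show "0 < e / (norm (a i) + norm (A i) + 1)" using assms(3) by (simp add: add_nonneg_pos)
  fix t :: real assume "\<bar>t\<bar> < e / (norm (a i) + norm (A i) + 1)"
  then have t: "\<bar>t\<bar> * (norm (a i) + norm (A i) + 1) < e"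
    by (simp add: pos_less_divide_eq add_nonneg_pos)
  let ?y = "x0 + t *\<^sub>R a i" and ?Y = "X0 + t *\<^sub>R A i"
  have "\<bar>t\<bar> * norm (a i) \<le> \<bar>t\<bar> * (norm (a i) + norm (A i) + 1)"
    "\<bar>t\<bar> * norm (A i) \<le> \<bar>t\<bar> * (norm (a i) + norm (A i) + 1)"
    by (intro mult_left_mono; simp)+
  then have "dist ?y x0 < e" "dist ?Y X0 < e" using t by (simp_all add: dist_norm)
  moreover have "transpose ?Y = ?Y"
    using assms(1,4) by (simp add: transpose_add_scaleR diag_mat_transpose)
  ultimately have "mat_dot (A i) ?Y + 2 * (a i \<bullet> ?y) \<le> b i"
    using ball by (simp add: S_feasible_def)
  then have "R_constraint A a b i ?y (\<chi> j. ?Y$j$j) \<le> 0"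
    using assms(1) by (simp add: R_constraint_def mat_dot_diag_mat)
  moreover have "R_constraint A a b i ?y (\<chi> j. ?Y$j$j) = R_constraint A a b i x0 (\<chi> j. X0$j$j) + t * ?s"
    by (simp add: R_constraint_def sum.distrib sum_distrib_left power2_eq_square
        algebra_simps)
  ultimately show "R_constraint A a b i x0 (\<chi> j. X0$j$j) + t * ?s \<le> 0" by simp
qed

lemma R_slater_point:
  fixes A :: "'m::finite \<Rightarrow> real^'n::finite^'n"
  assumes "\<forall>i. diag_mat (A i)" and "S_interior_nonempty A a b"
  shows "\<exists>x0 z0. (\<forall>j. (x0$j)^2 \<le> z0$j) \<and>
           (\<forall>i. R_constraint A a b i x0 z0 < 0 \<or> (\<forall>x z. R_constraint A a b i x z = 0))"
proof -
  obtain x0 X0 e where e: "0 < e" "transpose X0 = X0"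
    and ball: "\<And>y Y. transpose Y = Y \<Longrightarrow> dist y x0 < e \<Longrightarrow> dist Y X0 < e \<Longrightarrow> S_feasible A a b y Y"
    using assms(2) unfolding S_interior_nonempty_def by blast
  have R0: "R_feasible A a b x0 (\<chi> j. X0$j$j)"
    using R_feasible_of_S_feasible[OF assms(1)] ball[OF e(2)] e(1) by simp
  have "R_constraint A a b i x0 (\<chi> j. X0$j$j) < 0 \<or> (\<forall>x z. R_constraint A a b i x z = 0)" for i
  proof (cases "a i = 0 \<and> (\<forall>j. A i $ j $ j = 0)")
    case True
    then have "R_constraint A a b i x z = - b i" for x z by (simp add: R_constraint_def)
    then show ?thesis using R0 by (metis R_feasible_iff order_le_less)
  next
    case False
    then show ?thesis
      using S_interior_constraint_strict[OF _ _ e ball] assms(1) by blast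
  qed
  moreover have "\<forall>j. (x0$j)^2 \<le> (\<chi> j. X0$j$j) $ j" using R0 by (simp add: R_feasible_iff)
  ultimately show ?thesis by blast
qed

lemma R_lagrange_multipliers:
  fixes A :: "'m::finite \<Rightarrow> real^'n::finite^'n"
  assumes "\<forall>i. diag_mat (A i)" and "S_interior_nonempty A a b"
    and min: "\<And>x z. R_feasible A a b x z \<Longrightarrow> R_objective D c xs zs \<le> R_objective D c x z"
  shows "\<exists>\<mu>. (\<forall>i. 0 \<le> \<mu> i) \<and> (\<forall>x z. (\<forall>j. (x$j)^2 \<le> z$j) \<longrightarrow>
           R_objective D c xs zs \<le> R_objective D c x z + (\<Sum>i\<in>UNIV. \<mu> i * R_constraint A a b i x z))"
proof -
  let ?K = "{w :: (real^'n) \<times> (real^'n). \<forall>j. (fst w $ j)^2 \<le> snd w $ j}"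
  obtain x0 z0 where x0z0: "(x0, z0) \<in> ?K"
    and slater: "\<forall>i. R_constraint A a b i x0 z0 < 0 \<or> (\<forall>x z. R_constraint A a b i x z = 0)"
    using R_slater_point[OF assms(1,2)] by auto
  have opt: "R_objective D c xs zs \<le> R_objective D c (fst w) (snd w)"
    if "w \<in> ?K" "\<forall>i. R_constraint A a b i (fst w) (snd w) \<le> 0" for w
    using that min by (simp add: R_feasible_iff)
  have "\<exists>\<mu>. (\<forall>i. 0 \<le> \<mu> i) \<and> (\<forall>w\<in>?K. R_objective D c xs zs
      \<le> R_objective D c (fst w) (snd w) + (\<Sum>i\<in>UNIV. \<mu> i * R_constraint A a b i (fst w) (snd w)))"
    by (rule lagrange_multipliers[where g = "\<lambda>i w. R_constraint A a b i (fst w) (snd w)"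
          and ?w0.0 = "(x0, z0)"])
      (use convex_coordinatewise_square_le affine_fun_R_objective affine_fun_R_constraint
          opt x0z0 slater in auto)
  then show ?thesis by auto
qed

definition parabola_kkt :: "real \<Rightarrow> real \<Rightarrow> real \<Rightarrow> real \<Rightarrow> bool" where
  "parabola_kkt q l x z \<longleftrightarrow> 0 \<le> q \<and> q * x = - l \<and> q * z = - l * x \<and> (0 < q \<longrightarrow> z = x^2)"

lemma parabola_minimizer:
  fixes q l x z :: real
  assumes xz: "x^2 \<le> z" and min: "\<And>s t. s^2 \<le> t \<Longrightarrow> q * z + 2 * l * x \<le> q * t + 2 * l * s"
  shows "parabola_kkt q l x z"
proof -
  have "0 \<le> q"
  proof (rule nonneg_if_nonneg_along_ray)
    fix t :: real assume "0 \<le> t"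
    then show "0 \<le> - (q * z + 2 * l * x) + t * q" using min[of 0 t] by (simp add: mult.commute)
  qed
  show ?thesis
  proof (cases "q = 0")
    case True
    have "l^2 \<le> 0" using min[of "x - l" "(x - l)^2"] True by (simp add: power2_eq_square algebra_simps)
    then have "l = 0" by simp
    then show ?thesis using True by (simp add: parabola_kkt_def)
  next
    case False
    with \<open>0 \<le> q\<close> have q: "0 < q" by simp
    \<comment> \<open>\<open>- (l^2) / q\<close> is the minimum, attained at \<open>s = - l / q\<close>, \<open>t = s^2\<close>\<close>
    have "q * z + 2 * l * x \<le> - (l^2) / q"
      using min[of "- l / q" "(- l / q)^2"] q by (simp add: power2_eq_square field_simps)
    moreover have "q * z + 2 * l * x = q * (z - x^2) + q * (x + l / q)^2 - (l^2) / q"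
      using q by (simp add: power2_eq_square field_simps)
    moreover have "0 \<le> q * (z - x^2)" "0 \<le> q * (x + l / q)^2" using q xz by simp_all
    ultimately have "q * (z - x^2) = 0" "q * (x + l / q)^2 = 0" by linarith+
    then have "z = x^2" "x = - l / q" using q by simp_all
    then show ?thesis using q by (simp add: parabola_kkt_def power2_eq_square)
  qed
qed

lemma coordinatewise_minimizer:
  fixes \<phi> :: "'n::finite \<Rightarrow> real \<Rightarrow> real \<Rightarrow> real"
  assumes lo: "\<And>x z. \<forall>k. (x$k)^2 \<le> z$k \<Longrightarrow> m \<le> (\<Sum>k\<in>UNIV. \<phi> k (x$k) (z$k))"
    and hi: "(\<Sum>k\<in>UNIV. \<phi> k (xs$k) (zs$k)) \<le> m"
    and "\<forall>k. (xs$k)^2 \<le> zs$k" "s^2 \<le> t"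
  shows "\<phi> j (xs$j) (zs$j) \<le> \<phi> j s t"
proof -
  define x where "x = (\<chi> k. if k = j then s else xs$k)"
  define z where "z = (\<chi> k. if k = j then t else zs$k)"
  have "m \<le> (\<Sum>k\<in>UNIV. \<phi> k (x$k) (z$k))" using assms(3,4) by (intro lo) (simp add: x_def z_def)
  moreover have "(\<Sum>k\<in>UNIV. \<phi> k (x$k) (z$k)) - (\<Sum>k\<in>UNIV. \<phi> k (xs$k) (zs$k))
      = (\<Sum>k\<in>UNIV. if k = j then \<phi> j s t - \<phi> j (xs$j) (zs$j) else 0)"
    unfolding sum_subtractf[symmetric] by (intro sum.cong) (auto simp: x_def z_def)
  ultimately show ?thesis using hi by simp
qed

lemma R_minimizer_coordinatewise:
  assumes "\<forall>i. 0 \<le> \<mu> i" and R: "R_feasible A a b xs zs"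
    and lag: "\<forall>x z. (\<forall>j. (x$j)^2 \<le> z$j) \<longrightarrow>
      R_objective D c xs zs \<le> R_objective D c x z + (\<Sum>i\<in>UNIV. \<mu> i * R_constraint A a b i x z)"
  defines "q \<equiv> lagrangian_quad D A \<mu>" and "l \<equiv> lagrangian_lin c a \<mu>"
  shows "parabola_kkt (q j) (l j) (xs$j) (zs$j)"
proof (rule parabola_minimizer)
  let ?m = "R_objective D c xs zs + (\<Sum>i\<in>UNIV. \<mu> i * b i)"
  have sep: "R_objective D c x z + (\<Sum>i\<in>UNIV. \<mu> i * R_constraint A a b i x z) + (\<Sum>i\<in>UNIV. \<mu> i * b i)
      = (\<Sum>k\<in>UNIV. q k * z$k + 2 * l k * x$k)" for x z
    using R_lagrangian_separable[of D c x z \<mu> A a b] by (simp add: q_def l_def)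
  have "(\<Sum>i\<in>UNIV. \<mu> i * R_constraint A a b i xs zs) \<le> 0"
    using assms(1) R by (intro sum_nonpos) (simp add: R_feasible_iff mult_nonneg_nonpos)
  then have hi: "(\<Sum>k\<in>UNIV. q k * zs$k + 2 * l k * xs$k) \<le> ?m" using sep[of xs zs] by linarith
  have lo: "?m \<le> (\<Sum>k\<in>UNIV. q k * z$k + 2 * l k * x$k)" if "\<forall>k. (x$k)^2 \<le> z$k" for x z
    using lag that sep[of x z] by fastforce
  have xz: "\<forall>k. (xs$k)^2 \<le> zs$k" using R by (simp add: R_feasible_iff)
  then show "(xs$j)^2 \<le> zs$j" by simp
  fix s t :: real assume "s^2 \<le> t"
  then show "q j * zs$j + 2 * l j * xs$j \<le> q j * t + 2 * l j * s"
    using coordinatewise_minimizer[where \<phi> = "\<lambda>k x z. q k * z + 2 * l k * x", OF lo hi xz] by simp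
qed

lemma R_exact_if_tight:
  assumes "diag_mat D" "\<forall>i. diag_mat (A i)" and R: "R_feasible A a b xs zs"
    and min: "\<And>x z. R_feasible A a b x z \<Longrightarrow> R_objective D c xs zs \<le> R_objective D c x z"
    and tight: "\<forall>j. zs$j = (xs$j)^2"
  shows "cstar D c A a b = R_objective D c xs zs \<and> pstar D c A a b = R_objective D c xs zs"
proof
  have zs: "zs = (\<chi> j. (xs$j)^2)" using tight by (simp add: vec_eq_iff)
  show "cstar D c A a b = R_objective D c xs zs"
    unfolding cstar_def
  proof (rule cInf_eq_minimum)
    have "P_feasible A a b xs"
      using R assms(2) unfolding zs by (simp add: R_feasible_def P_feasible_def diag_mat_quadratic_form)
    then show "R_objective D c xs zs \<in> {x \<bullet> (D *v x) + 2 * (c \<bullet> x) |x. P_feasible A a b x}"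
      using R_objective_squares[OF assms(1)] zs by auto
  next
    fix v assume "v \<in> {x \<bullet> (D *v x) + 2 * (c \<bullet> x) |x. P_feasible A a b x}"
    then obtain x where "v = x \<bullet> (D *v x) + 2 * (c \<bullet> x)" "P_feasible A a b x" by blast
    then show "R_objective D c xs zs \<le> v"
      using min R_feasible_of_P_feasible[OF assms(2)] R_objective_squares[OF assms(1)] by metis
  qed
  show "pstar D c A a b = R_objective D c xs zs"
    unfolding pstar_def
    by (rule cInf_eq_minimum) (use R min in \<open>auto simp: R_objective_def\<close>)
qed

section \<open>Block structure\<close>

(* Conditions (a)-(h) of the theorem for the block h, with xx h' and zz h' standing for
   x_(j_h') and z_(j_h'). *)
definition inexactness_witness ::
    "real^'n^'n \<Rightarrow> real^'n \<Rightarrow> ('m::finite \<Rightarrow> real^'n) \<Rightarrow> ('m \<Rightarrow> real) \<Rightarrow> ('h::finite \<Rightarrow> 'n set)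
      \<Rightarrow> ('m \<Rightarrow> 'h \<Rightarrow> real) \<Rightarrow> ('h \<Rightarrow> 'n) \<Rightarrow> 'h \<Rightarrow> ('m \<Rightarrow> real) \<Rightarrow> ('h \<Rightarrow> real) \<Rightarrow> ('h \<Rightarrow> real) \<Rightarrow> bool" where
  "inexactness_witness D c a b Np \<xi> jh h \<mu> xx zz \<longleftrightarrow>
        dstar D Np h + (\<Sum>i\<in>UNIV. \<mu> i * \<xi> i h) = 0
      \<and> c $ jh h + (\<Sum>i\<in>UNIV. \<mu> i * a i $ jh h) = 0
      \<and> (\<forall>h'. h' \<noteq> h \<longrightarrow> dstar D Np h' + (\<Sum>i\<in>UNIV. \<mu> i * \<xi> i h') \<ge> 0)
      \<and> (\<forall>h'. h' \<noteq> h \<longrightarrow> (dstar D Np h' + (\<Sum>i\<in>UNIV. \<mu> i * \<xi> i h')) * xx h'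
                          = - (c $ jh h' + (\<Sum>i\<in>UNIV. \<mu> i * a i $ jh h')))
      \<and> (\<forall>h'. h' \<noteq> h \<longrightarrow> (dstar D Np h' + (\<Sum>i\<in>UNIV. \<mu> i * \<xi> i h')) * zz h'
                          = - (c $ jh h' + (\<Sum>i\<in>UNIV. \<mu> i * a i $ jh h')) * xx h')
      \<and> (\<forall>i. (\<Sum>h'\<in>UNIV. \<xi> i h' * (zz h' + (\<Sum>j\<in>Np h' - {jh h'}. (xh D c a Np \<xi> h \<mu> j)^2)))
              + 2 * (\<Sum>h'\<in>UNIV. a i $ jh h' * xx h')
              + 2 * (\<Sum>j\<in>UNIV - range jh. a i $ j * xh D c a Np \<xi> h \<mu> j) \<le> b i)
      \<and> (\<forall>h'. (xx h')^2 \<le> zz h')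
      \<and> (\<forall>i. 0 \<le> \<mu> i)"

locale block_partition =
  fixes D :: "real^'n::finite^'n" and A :: "'m::finite \<Rightarrow> real^'n^'n"
    and Np :: "'h::finite \<Rightarrow> 'n set" and \<xi> :: "'m \<Rightarrow> 'h \<Rightarrow> real" and jh :: "'h \<Rightarrow> 'n"
  assumes disjoint: "\<And>h h'. h \<noteq> h' \<Longrightarrow> Np h \<inter> Np h' = {}"
    and cover: "(\<Union>h. Np h) = UNIV"
    and block_const: "\<And>i h j. j \<in> Np h \<Longrightarrow> A i $ j $ j = \<xi> i h"
    and jh_in: "\<And>h. jh h \<in> Np h"
    and jh_min: "\<And>h. D $ jh h $ jh h = dstar D Np h"
    and jh_unique: "\<And>h j. j \<in> Np h \<Longrightarrow> D $ j $ j = dstar D Np h \<Longrightarrow> j = jh h"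
begin

lemma part_idx_eq: "j \<in> Np h \<Longrightarrow> part_idx Np j = h"
  unfolding part_idx_def using disjoint by (intro the_equality) blast+

lemma in_block_eq: "j \<in> Np h \<Longrightarrow> j \<in> Np h' \<Longrightarrow> h = h'"
  using disjoint by blast

lemma inj_jh: "inj jh"
  by (rule injI) (use jh_in in_block_eq in metis)

lemma notin_range_jh_iff: "j \<notin> range jh \<longleftrightarrow> (\<exists>h. j \<in> Np h \<and> j \<noteq> jh h)"
proof
  assume j: "j \<notin> range jh"
  obtain h where "j \<in> Np h" using cover by blast
  with j show "\<exists>h. j \<in> Np h \<and> j \<noteq> jh h" by auto
next
  assume "\<exists>h. j \<in> Np h \<and> j \<noteq> jh h"
  then show "j \<notin> range jh" using jh_in in_block_eq by blast
qed

lemma sum_over_blocks: "(\<Sum>j\<in>UNIV. f j) = (\<Sum>h\<in>UNIV. \<Sum>j\<in>Np h. f j)"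
proof -
  have "(\<Sum>j\<in>UNIV. f j) = (\<Sum>j\<in>(\<Union>h. Np h). f j)" using cover by simp
  also have "\<dots> = (\<Sum>h\<in>UNIV. \<Sum>j\<in>Np h. f j)" by (rule sum.UNION_disjoint) (use disjoint in auto)
  finally show ?thesis .
qed

lemma inner_split_range_jh:
  "v \<bullet> x = (\<Sum>h\<in>UNIV. v $ jh h * x $ jh h) + (\<Sum>j\<in>UNIV - range jh. v$j * x$j)"
proof -
  have "v \<bullet> x = (\<Sum>j\<in>range jh. v$j * x$j) + (\<Sum>j\<in>UNIV - range jh. v$j * x$j)"
    unfolding inner_vec_def inner_real_def by (subst sum.subset_diff[of "range jh"]) auto
  then show ?thesis by (simp add: sum.reindex[OF inj_jh])
qed

lemma lagrangian_quad_block: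
  "j \<in> Np h \<Longrightarrow> lagrangian_quad D A \<mu> j = D$j$j + (\<Sum>i\<in>UNIV. \<mu> i * \<xi> i h)"
  by (simp add: lagrangian_quad_def block_const)

lemma lagrangian_quad_jh: "lagrangian_quad D A \<mu> (jh h) = dstar D Np h + (\<Sum>i\<in>UNIV. \<mu> i * \<xi> i h)"
  using lagrangian_quad_block[OF jh_in] jh_min by simp

lemma lagrangian_quad_jh_less:
  assumes "j \<in> Np h" "j \<noteq> jh h"
  shows "lagrangian_quad D A \<mu> (jh h) < lagrangian_quad D A \<mu> j"
proof -
  have "dstar D Np h \<le> D$j$j" unfolding dstar_def using assms(1) by (intro Min_le) auto
  moreover have "D$j$j \<noteq> dstar D Np h" using jh_unique assms by blast
  ultimately show ?thesis using lagrangian_quad_jh lagrangian_quad_block[OF assms(1)] by simp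
qed

lemma xh_eq_stationary:
  assumes "j \<in> Np h'" "j \<noteq> jh h'" "lagrangian_quad D A \<mu> (jh h) = 0"
  shows "xh D c a Np \<xi> h \<mu> j = - lagrangian_lin c a \<mu> j / lagrangian_quad D A \<mu> j"
proof (cases "h' = h")
  case True
  then have "lagrangian_quad D A \<mu> j = D$j$j - dstar D Np h"
    using assms(3) lagrangian_quad_jh[of \<mu> h] lagrangian_quad_block[OF assms(1)] by simp
  then show ?thesis
    using True by (simp add: xh_def part_idx_eq[OF assms(1)] lagrangian_lin_def add_divide_distrib diff_divide_distrib)
next
  case False
  then show ?thesis using lagrangian_quad_block[OF assms(1)]
    by (simp add: xh_def part_idx_eq[OF assms(1)] lagrangian_lin_def add_divide_distrib diff_divide_distrib mult.commute)
qed

lemma R_constraint_blocks: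
  assumes "\<And>j. j \<notin> range jh \<Longrightarrow> x$j = y j \<and> z$j = (y j)^2"
  shows "R_constraint A a b i x z =
      (\<Sum>h\<in>UNIV. \<xi> i h * (z $ jh h + (\<Sum>j\<in>Np h - {jh h}. (y j)^2)))
      + 2 * (\<Sum>h\<in>UNIV. a i $ jh h * x $ jh h)
      + 2 * (\<Sum>j\<in>UNIV - range jh. a i $ j * y j) - b i"
proof -
  have blocks: "(\<Sum>j\<in>Np h. A i $ j $ j * z$j) = \<xi> i h * (z $ jh h + (\<Sum>j\<in>Np h - {jh h}. (y j)^2))"
    for h
  proof -
    have "(\<Sum>j\<in>Np h. A i $ j $ j * z$j) = \<xi> i h * (z $ jh h + (\<Sum>j\<in>Np h - {jh h}. z$j))"
      using jh_in by (simp add: block_const sum_distrib_left[symmetric] sum.remove[of "Np h" "jh h"])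
    moreover have "z$j = (y j)^2" if "j \<in> Np h - {jh h}" for j
      using assms[of j] that notin_range_jh_iff by blast
    ultimately show ?thesis by simp
  qed
  have off: "(\<Sum>j\<in>UNIV - range jh. a i $ j * x$j) = (\<Sum>j\<in>UNIV - range jh. a i $ j * y j)"
    using assms by simp
  show ?thesis
    unfolding R_constraint_def inner_split_range_jh[of "a i"] sum_over_blocks[of "\<lambda>j. A i $ j $ j * z$j"]
      blocks off by (simp only: distrib_left add.assoc)
qed

end

lemma (in block_partition) lagrangian_quad_pos_off_range:
  assumes "\<And>h. 0 \<le> lagrangian_quad D A \<mu> (jh h)" "k \<notin> range jh"
  shows "0 < lagrangian_quad D A \<mu> k"
proof -
  from assms(2)[unfolded notin_range_jh_iff] obtain h where "k \<in> Np h" "k \<noteq> jh h" by blast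
  then show ?thesis using lagrangian_quad_jh_less[of k h \<mu>] assms(1)[of h] by linarith
qed

lemma (in block_partition) minimizer_off_range_eq_xh:
  assumes kkt: "\<And>j. parabola_kkt (lagrangian_quad D A \<mu> j) (lagrangian_lin c a \<mu> j) (xs$j) (zs$j)"
    and "lagrangian_quad D A \<mu> (jh h) = 0" "k \<notin> range jh"
  shows "xs$k = xh D c a Np \<xi> h \<mu> k \<and> zs$k = (xs$k)^2"
proof -
  have q: "0 < lagrangian_quad D A \<mu> k"
    using kkt assms(3) by (intro lagrangian_quad_pos_off_range) (auto simp: parabola_kkt_def)
  from assms(3)[unfolded notin_range_jh_iff] obtain h' where h': "k \<in> Np h'" "k \<noteq> jh h'" by blast
  have "xs$k = - lagrangian_lin c a \<mu> k / lagrangian_quad D A \<mu> k"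
    using kkt[of k] q by (auto simp: parabola_kkt_def field_simps)
  then show ?thesis using xh_eq_stationary[OF h' assms(2)] kkt[of k] q by (simp add: parabola_kkt_def)
qed

lemma (in block_partition) inexactness_witness_of_degenerate_block:
  assumes "\<forall>i. 0 \<le> \<mu> i" and R: "R_feasible A a b xs zs"
    and kkt: "\<And>j. parabola_kkt (lagrangian_quad D A \<mu> j) (lagrangian_lin c a \<mu> j) (xs$j) (zs$j)"
    and degenerate: "lagrangian_quad D A \<mu> (jh h) = 0"
  shows "inexactness_witness D c a b Np \<xi> jh h \<mu> (\<lambda>h'. xs $ jh h') (\<lambda>h'. zs $ jh h')"
  unfolding inexactness_witness_def
proof (intro conjI allI impI)
  show "dstar D Np h + (\<Sum>i\<in>UNIV. \<mu> i * \<xi> i h) = 0" using degenerate lagrangian_quad_jh by simp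
  show "c $ jh h + (\<Sum>i\<in>UNIV. \<mu> i * a i $ jh h) = 0"
    using kkt[of "jh h"] degenerate by (simp add: parabola_kkt_def lagrangian_lin_def)
  fix h'
  show "dstar D Np h' + (\<Sum>i\<in>UNIV. \<mu> i * \<xi> i h') \<ge> 0"
    and "(dstar D Np h' + (\<Sum>i\<in>UNIV. \<mu> i * \<xi> i h')) * xs $ jh h'
          = - (c $ jh h' + (\<Sum>i\<in>UNIV. \<mu> i * a i $ jh h'))"
    and "(dstar D Np h' + (\<Sum>i\<in>UNIV. \<mu> i * \<xi> i h')) * zs $ jh h'
          = - (c $ jh h' + (\<Sum>i\<in>UNIV. \<mu> i * a i $ jh h')) * xs $ jh h'"
    using kkt[of "jh h'"] by (simp_all add: parabola_kkt_def lagrangian_quad_jh lagrangian_lin_def)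
  show "(xs $ jh h')^2 \<le> zs $ jh h'" using R by (simp add: R_feasible_iff)
next
  fix i
  have "R_constraint A a b i xs zs \<le> 0" using R by (simp add: R_feasible_iff)
  then show "(\<Sum>h'\<in>UNIV. \<xi> i h' * (zs $ jh h' + (\<Sum>k\<in>Np h' - {jh h'}. (xh D c a Np \<xi> h \<mu> k)^2)))
            + 2 * (\<Sum>h'\<in>UNIV. a i $ jh h' * xs $ jh h')
            + 2 * (\<Sum>k\<in>UNIV - range jh. a i $ k * xh D c a Np \<xi> h \<mu> k) \<le> b i"
    using R_constraint_blocks[of xs "xh D c a Np \<xi> h \<mu>" zs a b i]
      minimizer_off_range_eq_xh[OF kkt degenerate] by simp
  show "0 \<le> \<mu> i" using assms(1) by simp
qed

lemma (in block_partition) tight_if_no_inexactness_witness: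
  assumes "\<forall>i. 0 \<le> \<mu> i" and R: "R_feasible A a b xs zs"
    and kkt: "\<And>j. parabola_kkt (lagrangian_quad D A \<mu> j) (lagrangian_lin c a \<mu> j) (xs$j) (zs$j)"
    and no_witness: "\<And>h xx zz. \<not> inexactness_witness D c a b Np \<xi> jh h \<mu> xx zz"
  shows "zs$j = (xs$j)^2"
proof (rule ccontr)
  assume "zs$j \<noteq> (xs$j)^2"
  then have q: "lagrangian_quad D A \<mu> j = 0" using kkt[of j] by (auto simp: parabola_kkt_def order_le_less)
  have "j \<in> range jh"
    using lagrangian_quad_pos_off_range[of \<mu> j] kkt q by (force simp: parabola_kkt_def)
  then obtain h where "j = jh h" by blast
  then show False
    using inexactness_witness_of_degenerate_block[OF assms(1) R kkt] q no_witness by blast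
qed

theorem mainTheorem5:
  fixes D :: "real^'n::finite^'n" and c :: "real^'n"
    and A :: "'m::finite \<Rightarrow> real^'n^'n" and a :: "'m \<Rightarrow> real^'n" and b :: "'m \<Rightarrow> real"
    and Np :: "'h::finite \<Rightarrow> 'n set" and \<xi> :: "'m \<Rightarrow> 'h \<Rightarrow> real" and jh :: "'h \<Rightarrow> 'n"
  assumes diagD: "diag_mat D"
    and diagA: "\<forall>i. diag_mat (A i)"
    and A1_i: "\<exists>x. P_feasible A a b x"
    and A1_ii: "\<exists>ybar :: 'm \<Rightarrow> real. (\<forall>i. 0 \<le> ybar i) \<and> pd (\<Sum>i\<in>UNIV. ybar i *\<^sub>R A i)"
    and A1_iii: "S_interior_nonempty A a b"
    and part_ne: "\<forall>h. Np h \<noteq> {}"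
    and part_disj: "\<forall>h h'. h \<noteq> h' \<longrightarrow> Np h \<inter> Np h' = {}"
    and part_cover: "(\<Union>h. Np h) = UNIV"
    and xi: "\<forall>i h. \<forall>j\<in>Np h. A i $ j $ j = \<xi> i h"
    and jh_in: "\<forall>h. jh h \<in> Np h"
    and jh_min: "\<forall>h. D $ jh h $ jh h = dstar D Np h"
    and jh_unique: "\<forall>h. \<forall>j\<in>Np h. D $ j $ j = dstar D Np h \<longrightarrow> j = jh h"
    and cond: "\<forall>h. \<not> (\<exists>(\<mu> :: 'm \<Rightarrow> real) (xx :: 'h \<Rightarrow> real) (zz :: 'h \<Rightarrow> real).
        dstar D Np h + (\<Sum>i\<in>UNIV. \<mu> i * \<xi> i h) = 0
      \<and> c $ jh h + (\<Sum>i\<in>UNIV. \<mu> i * a i $ jh h) = 0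
      \<and> (\<forall>h'. h' \<noteq> h \<longrightarrow> dstar D Np h' + (\<Sum>i\<in>UNIV. \<mu> i * \<xi> i h') \<ge> 0)
      \<and> (\<forall>h'. h' \<noteq> h \<longrightarrow> (dstar D Np h' + (\<Sum>i\<in>UNIV. \<mu> i * \<xi> i h')) * xx h'
                          = - (c $ jh h' + (\<Sum>i\<in>UNIV. \<mu> i * a i $ jh h')))
      \<and> (\<forall>h'. h' \<noteq> h \<longrightarrow> (dstar D Np h' + (\<Sum>i\<in>UNIV. \<mu> i * \<xi> i h')) * zz h'
                          = - (c $ jh h' + (\<Sum>i\<in>UNIV. \<mu> i * a i $ jh h')) * xx h')
      \<and> (\<forall>i. (\<Sum>h'\<in>UNIV. \<xi> i h' * (zz h' + (\<Sum>j\<in>Np h' - {jh h'}. (xh D c a Np \<xi> h \<mu> j)^2)))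
              + 2 * (\<Sum>h'\<in>UNIV. a i $ jh h' * xx h')
              + 2 * (\<Sum>j\<in>UNIV - range jh. a i $ j * xh D c a Np \<xi> h \<mu> j) \<le> b i)
      \<and> (\<forall>h'. (xx h')^2 \<le> zz h')
      \<and> (\<forall>i. 0 \<le> \<mu> i))"
  shows "vstar D c A a b = cstar D c A a b \<and> pstar D c A a b = cstar D c A a b"
proof -
  interpret block_partition D A Np \<xi> jh
    using part_disj part_cover xi jh_in jh_min jh_unique by unfold_locales auto
  obtain xs zs where R: "R_feasible A a b xs zs"
    and min: "\<forall>x z. R_feasible A a b x z \<longrightarrow> R_objective D c xs zs \<le> R_objective D c x z"
    using R_minimizer_exists[OF diagA A1_i A1_ii] by blast
  obtain \<mu> where \<mu>: "\<forall>i. 0 \<le> \<mu> i" and lag: "\<forall>x z. (\<forall>j. (x$j)^2 \<le> z$j) \<longrightarrow>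
      R_objective D c xs zs \<le> R_objective D c x z + (\<Sum>i\<in>UNIV. \<mu> i * R_constraint A a b i x z)"
    using R_lagrange_multipliers[OF diagA A1_iii] min by blast
  have "\<And>h xx zz. \<not> inexactness_witness D c a b Np \<xi> jh h \<mu> xx zz"
    using cond unfolding inexactness_witness_def by blast
  then have tight: "\<forall>j. zs$j = (xs$j)^2"
    using tight_if_no_inexactness_witness[OF \<mu> R R_minimizer_coordinatewise[OF \<mu> R lag]] by blast
  show ?thesis
    using R_exact_if_tight[OF diagD diagA R _ tight] min vstar_eq_pstar[OF diagD diagA] by simp
qed

end
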